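(* Let $\bar\gamma_{\mathrm{E}}>0$, $\mathcal{R}>0$ and $\alpha>0$ be fixed, and let $\bar\gamma_{\mathrm{D}}>0$ with $\bar\gamma_{\mathrm{R}}=\alpha\bar\gamma_{\mathrm{D}}$. Let $h_{\mathrm{S},\mathrm{R}},h_{\mathrm{R},\mathrm{D}},h_{\mathrm{S},\mathrm{E}}$ be independent $\mathcal{CN}(0,1)$ random variables, and define $$\mathcal{R}^{2}_{\mathrm{S}\to\mathrm{R}}=\log_2\frac{1+\bar\gamma_{\mathrm{R}}|h_{\mathrm{S},\mathrm{R}}|^2}{1+\bar\gamma_{\mathrm{E}}|h_{\mathrm{S},\mathrm{E}}|^2},\qquad \mathcal{R}^{2}_{\mathrm{R}\to\mathrm{D}}=\log_2\left(1+\bar\gamma_{\mathrm{D}}|h_{\mathrm{R},\mathrm{D}}|^2\right),$$ $\mathcal{R}_2=\max\{\min\{\mathcal{R}^{2}_{\mathrm{S}\to\mathrm{R}},\mathcal{R}^{2}_{\mathrm{R}\to\mathrm{D}}\},0\}$ and $\mathcal{P}_2=\Pr(\mathcal{R}_2<\mathcal{R})$. Then as $\bar\gamma_{\mathrm{D}}\to\infty$, $$\mathcal{P}_2\approx\mathcal{M}_2\bar\gamma_{\mathrm{D}}^{-1},$$ in the sense that $\bar\gamma_{\mathrm{D}}\mathcal{P}_2\to\mathcal{M}_2$, where $\mathcal{M}_2=(2^{\mathcal{R}}-1)(1+1/\alpha)+2^{\mathcal{R}}\bar\gamma_{\mathrm{E}}/\alpha>0$.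
   Context: $\mathcal{CN}(0,1)$ denotes a circularly symmetric complex Gaussian random variable with zero mean and unit variance (Rayleigh fading). The quantities model a decode-and-forward relay system where the eavesdropper overhears only the source; $\bar\gamma$'s are average SNRs, $\mathcal{R}_2$ the secrecy capacity and $\mathcal{P}_2$ the secrecy outage probability. *)

theory Defs
  imports "HOL-Probability.Probability"
begin

definition CN01_density :: "complex \<Rightarrow> ennreal" where
  "CN01_density z = ennreal (exp (- ((cmod z)^2)) / (of_real pi :: real))"

definition rate_SR :: "real \<Rightarrow> real \<Rightarrow> complex \<Rightarrow> complex \<Rightarrow> real" where
  "rate_SR gR gE hSR hSE = log 2 ((1 + gR * (cmod hSR)^2) / (1 + gE * (cmod hSE)^2))"

definition rate_RD :: "real \<Rightarrow> complex \<Rightarrow> real" where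
  "rate_RD gD hRD = log 2 (1 + gD * (cmod hRD)^2)"

definition secrecy_rate2 :: "real \<Rightarrow> real \<Rightarrow> real \<Rightarrow> complex \<Rightarrow> complex \<Rightarrow> complex \<Rightarrow> real" where
  "secrecy_rate2 gE alpha gD hSR hRD hSE =
     max (min (rate_SR (alpha * gD) gE hSR hSE) (rate_RD gD hRD)) 0"

definition M2_const :: "real \<Rightarrow> real \<Rightarrow> real \<Rightarrow> real" where
  "M2_const gE alpha R = (2 powr R - 1) * (1 + 1 / alpha) + 2 powr R * gE / alpha"

end

theory Submission
  imports Defs
begin

(* For h ~ CN(0,1) the power |h|^2 is Exp(1)-distributed: writing exp(-|z|^2) as the
   tail integral of e^(-s) from |z|^2 and exchanging the integrals leaves the area pi*s of
   a disc. With X_i = |h_i|^2 and c = 2^R, the link rates are at least R exactly when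
   X_0 >= u + v X_2 and X_1 >= w, where u = (c-1)/(alpha gD), v = c gE/(alpha gD) and
   w = (c-1)/gD. Integrating the exponential tail of X_0 against the density of X_2
   gives exp(-u)/(1+v), so by independence the outage probability is
   1 - exp(-a/gD)/(1 + b/gD) with a + b = M_2. Finally gD times this tends to the
   derivative a + b of t |-> 1 - exp(-a t)/(1 + b t) at t = 0. *)

lemma nn_integral_exponential_density_atLeast:
  assumes "0 < l" and "0 \<le> r"
  shows "(\<integral>\<^sup>+s. ennreal (exponential_density l s) * indicator {r..} s \<partial>lborel) = ennreal (exp (- r * l))"
proof -
  have "(\<integral>\<^sup>+s. ennreal (exponential_density l s) * indicator {r..} s \<partial>lborel) = 0 - (- exp (- r * l))"
  proof (rule nn_integral_FTC_atLeast)
    have "LIM x at_top. x * l :> at_top"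
      by (rule filterlim_at_top_mult_tendsto_pos[OF tendsto_const \<open>0 < l\<close> filterlim_ident])
    then have "LIM x at_top. - (x * l) :> at_bot"
      by (simp add: filterlim_uminus_at_bot)
    then have "((\<lambda>x. exp (- x * l)) \<longlongrightarrow> 0) at_top"
      by (simp add: filterlim_compose[OF exp_at_bot])
    then show "((\<lambda>x. - exp (- x * l)) \<longlongrightarrow> 0) at_top"
      using tendsto_minus by fastforce
  qed (use assms in \<open>auto simp: exponential_density_def intro!: derivative_eq_intros\<close>)
  then show ?thesis by simp
qed

lemma nn_integral_exponential_density_greaterThan:
  assumes "0 < l" and "0 \<le> r"
  shows "(\<integral>\<^sup>+s. ennreal (exponential_density l s) * indicator {r<..} s \<partial>lborel) = ennreal (exp (- r * l))"
proof -
  have "AE s in lborel. indicator {r<..} s = (indicator {r..} s :: ennreal)"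
    using AE_lborel_singleton[of r] by eventually_elim (auto simp: indicator_def)
  then show ?thesis
    by (subst nn_integral_cong_AE[where v = "\<lambda>s. ennreal (exponential_density l s) * indicator {r..} s"])
       (auto elim!: eventually_mono simp: nn_integral_exponential_density_atLeast assms)
qed

lemma emeasure_lborel_complex_norm_square_less_le:
  assumes "0 \<le> t"
  shows "emeasure lborel {z::complex. (cmod z)^2 < s \<and> (cmod z)^2 \<le> t} = ennreal (pi * max 0 (min s t))"
proof -
  have less_s: "(cmod z)^2 < s \<longleftrightarrow> cmod z < sqrt s" and le_t: "(cmod z)^2 \<le> t \<longleftrightarrow> cmod z \<le> sqrt t"
    for z :: complex
    using real_sqrt_less_iff[of "(cmod z)^2" s] real_sqrt_le_iff[of "(cmod z)^2" t] by simp_all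
  consider "s \<le> 0" | "0 < s" "s \<le> t" | "t < s" by linarith
  then show ?thesis
  proof cases
    case 1
    have "\<not> (cmod z)^2 < s" for z :: complex
      by (simp add: not_less order_trans[OF 1])
    then have empty: "{z::complex. (cmod z)^2 < s \<and> (cmod z)^2 \<le> t} = {}"
      by blast
    show ?thesis
      unfolding empty using 1 by simp
  next
    case 2
    then have "{z::complex. (cmod z)^2 < s \<and> (cmod z)^2 \<le> t} = ball 0 (sqrt s)"
      by (auto simp: less_s[symmetric])
    then show ?thesis using 2 by (simp add: emeasure_ball unit_ball_vol_2)
  next
    case 3
    then have "{z::complex. (cmod z)^2 < s \<and> (cmod z)^2 \<le> t} = cball 0 (sqrt t)"
      by (auto simp: le_t[symmetric])
    then show ?thesis using 3 assms by (simp add: emeasure_cball unit_ball_vol_2)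
  qed
qed

lemma nn_integral_exponential_density_mult_min:
  assumes "0 \<le> t"
  shows "(\<integral>\<^sup>+s. ennreal (exponential_density 1 s * min s t) \<partial>lborel) = ennreal (1 - exp (- t))"
proof -
  have "(\<integral>\<^sup>+s. ennreal (exponential_density 1 s * min s t) \<partial>lborel) =
      (\<integral>\<^sup>+s. ennreal (s * exp (- s)) * indicator {0..t} s +
        ennreal t * (ennreal (exponential_density 1 s) * indicator {t<..} s) \<partial>lborel)"
    using assms
    by (auto simp: exponential_density_def ennreal_mult[symmetric] intro!: nn_integral_cong split: split_indicator)
  also have "\<dots> = ennreal (1 - exp (- t) - t * exp (- t)) + ennreal t * ennreal (exp (- t))"
  proof -
    have "(\<integral>\<^sup>+s. ennreal (s * exp (- s)) * indicator {0..t} s \<partial>lborel) = ennreal (1 - exp (- t) - t * exp (- t))"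
      using nn_intergal_power_times_exp_Icc[OF assms, of 1] by (simp add: algebra_simps)
    moreover have "(\<integral>\<^sup>+s. ennreal (exponential_density 1 s) * indicator {t<..} s \<partial>lborel) = ennreal (exp (- t))"
      using nn_integral_exponential_density_greaterThan[of 1 t] assms by simp
    ultimately show ?thesis
      by (simp add: nn_integral_add nn_integral_cmult)
  qed
  also have "\<dots> = ennreal (1 - exp (- t))"
  proof -
    have "(1 + t) * exp (- t) \<le> 1"
      using exp_ge_add_one_self[of t] by (simp add: exp_minus field_simps)
    then show ?thesis
      using assms by (simp add: ennreal_mult[symmetric] ennreal_plus[symmetric] algebra_simps del: ennreal_plus)
  qed
  finally show ?thesis .
qed

lemma nn_integral_CN01_density_norm_square_le:
  assumes "0 \<le> t"
  shows "(\<integral>\<^sup>+z. CN01_density z * indicator {z. (cmod z)^2 \<le> t} z \<partial>lborel) = ennreal (1 - exp (- t))"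
proof -
  let ?ed = "\<lambda>s. ennreal (exponential_density 1 s)"
  let ?D = "\<lambda>s. {z::complex. (cmod z)^2 < s \<and> (cmod z)^2 \<le> t}"
  have layer_cake: "CN01_density z = ennreal (1 / pi) * (\<integral>\<^sup>+s. ?ed s * indicator {(cmod z)^2<..} s \<partial>lborel)"
    for z :: complex
    by (simp add: CN01_density_def nn_integral_exponential_density_greaterThan ennreal_mult[symmetric])
  have "CN01_density z * indicator {z. (cmod z)^2 \<le> t} z =
      (\<integral>\<^sup>+s. ennreal (1 / pi) * ?ed s * indicator (?D s) z \<partial>lborel)" for z
  proof -
    have "(\<integral>\<^sup>+s. ennreal (1 / pi) * ?ed s * indicator (?D s) z \<partial>lborel) =
        (\<integral>\<^sup>+s. (ennreal (1 / pi) * indicator {z. (cmod z)^2 \<le> t} z) *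
          (?ed s * indicator {(cmod z)^2<..} s) \<partial>lborel)"
      by (intro nn_integral_cong) (auto split: split_indicator)
    also have "\<dots> = ennreal (1 / pi) * indicator {z. (cmod z)^2 \<le> t} z *
        (\<integral>\<^sup>+s. ?ed s * indicator {(cmod z)^2<..} s \<partial>lborel)"
      by (rule nn_integral_cmult) measurable
    finally show ?thesis by (simp add: layer_cake mult_ac)
  qed
  then have "(\<integral>\<^sup>+z. CN01_density z * indicator {z. (cmod z)^2 \<le> t} z \<partial>lborel) =
      (\<integral>\<^sup>+z. \<integral>\<^sup>+s. ennreal (1 / pi) * ?ed s * indicator (?D s) z \<partial>lborel \<partial>lborel)"
    by simp
  also have "\<dots> = (\<integral>\<^sup>+s. \<integral>\<^sup>+z. ennreal (1 / pi) * ?ed s * indicator (?D s) z \<partial>lborel \<partial>lborel)"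
    by (rule lborel_pair.Fubini') measurable
  also have "\<dots> = (\<integral>\<^sup>+s. ennreal (1 / pi) * ?ed s * emeasure lborel (?D s) \<partial>lborel)"
    by (intro nn_integral_cong nn_integral_cmult_indicator) measurable
  also have "\<dots> = (\<integral>\<^sup>+s. ennreal (exponential_density 1 s * min s t) \<partial>lborel)"
    using assms
    by (auto simp: emeasure_lborel_complex_norm_square_less_le ennreal_mult[symmetric] exponential_density_def
        intro!: nn_integral_cong)
  also have "\<dots> = ennreal (1 - exp (- t))"
    by (rule nn_integral_exponential_density_mult_min) fact
  finally show ?thesis .
qed

lemma distributed_CN01_norm_square:
  assumes "distributed M lborel H CN01_density"
  shows "distributed M lborel (\<lambda>\<omega>. (cmod (H \<omega>))^2) (exponential_density 1)"
proof (rule exponential_distributedI)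
  have [measurable]: "H \<in> borel_measurable M"
    using distributed_measurable[OF assms] by simp
  show "(\<lambda>\<omega>. (cmod (H \<omega>))^2) \<in> borel_measurable M"
    by measurable
  fix a :: real
  assume "0 \<le> a"
  have "emeasure M {\<omega> \<in> space M. (cmod (H \<omega>))^2 \<le> a} = emeasure M (H -` {z. (cmod z)^2 \<le> a} \<inter> space M)"
    by (auto intro!: arg_cong[where f = "emeasure M"])
  also have "\<dots> = (\<integral>\<^sup>+z. CN01_density z * indicator {z. (cmod z)^2 \<le> a} z \<partial>lborel)"
    by (rule distributed_emeasure[OF assms]) measurable
  also have "\<dots> = ennreal (1 - exp (- a))"
    by (rule nn_integral_CN01_density_norm_square_le) fact
  finally show "emeasure M {\<omega> \<in> space M. (cmod (H \<omega>))^2 \<le> a} = 1 - ennreal (exp (- a * 1))"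
    using ennreal_minus[of "exp (- a)" 1] by simp
qed simp

lemma (in prob_space) prob_exponential_atLeast:
  assumes D: "distributed M lborel X (exponential_density l)" and "0 < l" and "0 \<le> a"
  shows "\<P>(\<omega> in M. a \<le> X \<omega>) = exp (- a * l)"
proof -
  have "emeasure M {\<omega> \<in> space M. a \<le> X \<omega>} = emeasure M (X -` {a..} \<inter> space M)"
    by (auto intro!: arg_cong[where f = "emeasure M"])
  also have "\<dots> = (\<integral>\<^sup>+s. ennreal (exponential_density l s) * indicator {a..} s \<partial>lborel)"
    by (rule distributed_emeasure[OF D]) simp
  also have "\<dots> = ennreal (exp (- a * l))"
    by (rule nn_integral_exponential_density_atLeast) fact+
  finally show ?thesis
    by (simp add: emeasure_eq_measure)
qed

lemma affine_le_in_sets_lborel_pair: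
  "{p :: real \<times> real. u + v * snd p \<le> fst p} \<in> sets (lborel \<Otimes>\<^sub>M lborel)"
proof -
  have "{p :: real \<times> real. u + v * snd p \<le> fst p} = {p \<in> space (borel \<Otimes>\<^sub>M borel). u + v * snd p \<le> fst p}"
    by (simp add: space_pair_measure)
  also have "\<dots> \<in> sets (borel \<Otimes>\<^sub>M borel)"
    by measurable
  finally show ?thesis
    by simp
qed

lemma exponential_density_mult_exp:
  assumes "0 < k" and "0 \<le> l" and "0 \<le> v"
  shows "exponential_density k z * exp (- (u + v * z) * l) =
    exp (- u * l) * k / (k + v * l) * exponential_density (k + v * l) z"
  using assms add_pos_nonneg[of k "v * l"]
  by (auto simp: exponential_density_def field_simps exp_add[symmetric])

lemma (in prob_space) prob_affine_le_indep_exponential: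
  assumes DX: "distributed M lborel X (exponential_density l)"
    and DZ: "distributed M lborel Z (exponential_density k)"
    and indep: "indep_var lborel X lborel Z"
    and "0 < l" "0 < k" "0 \<le> u" "0 \<le> v"
  shows "\<P>(\<omega> in M. u + v * Z \<omega> \<le> X \<omega>) = exp (- u * l) * k / (k + v * l)"
proof -
  define c where "c = exp (- u * l) * k / (k + v * l)"
  have "0 < k + v * l"
    using assms by (simp add: add_pos_nonneg)
  then have "0 \<le> c"
    using assms by (simp add: c_def)
  let ?ed = "\<lambda>l s. ennreal (exponential_density l s)"
  let ?S = "{p :: real \<times> real. u + v * snd p \<le> fst p}"
  have J: "distributed M (lborel \<Otimes>\<^sub>M lborel) (\<lambda>\<omega>. (X \<omega>, Z \<omega>)) (\<lambda>(x, z). ?ed l x * ?ed k z)"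
    by (rule distributed_joint_indep[OF sigma_finite_lborel sigma_finite_lborel DX DZ indep])
  have "emeasure M {\<omega> \<in> space M. u + v * Z \<omega> \<le> X \<omega>} = emeasure M ((\<lambda>\<omega>. (X \<omega>, Z \<omega>)) -` ?S \<inter> space M)"
    by (auto intro!: arg_cong[where f = "emeasure M"])
  also have "\<dots> = (\<integral>\<^sup>+p. (\<lambda>(x, z). ?ed l x * ?ed k z) p * indicator ?S p \<partial>(lborel \<Otimes>\<^sub>M lborel))"
    by (rule distributed_emeasure[OF J affine_le_in_sets_lborel_pair])
  also have "\<dots> = (\<integral>\<^sup>+z. \<integral>\<^sup>+x. ?ed k z * (?ed l x * indicator {u + v * z..} x) \<partial>lborel \<partial>lborel)"
    by (subst lborel_pair.nn_integral_snd[symmetric])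
       (auto intro!: nn_integral_cong simp: indicator_def mult_ac)
  also have "\<dots> = (\<integral>\<^sup>+z. ?ed k z * ennreal (exp (- (u + v * z) * l)) \<partial>lborel)"
  proof (intro nn_integral_cong)
    fix z :: real
    show "(\<integral>\<^sup>+x. ?ed k z * (?ed l x * indicator {u + v * z..} x) \<partial>lborel) = ?ed k z * ennreal (exp (- (u + v * z) * l))"
    proof (cases "z < 0")
      case False
      then show ?thesis
        using assms by (simp add: nn_integral_cmult nn_integral_exponential_density_atLeast)
    qed (simp add: exponential_density_def)
  qed
  also have "\<dots> = (\<integral>\<^sup>+z. ennreal c * ?ed (k + v * l) z \<partial>lborel)"
    using exponential_density_mult_exp[OF \<open>0 < k\<close> less_imp_le[OF \<open>0 < l\<close>] \<open>0 \<le> v\<close>, where u = u, folded c_def]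
      \<open>0 < k\<close> \<open>0 < k + v * l\<close> \<open>0 \<le> c\<close>
    by (intro nn_integral_cong) (simp add: ennreal_mult[symmetric] exponential_density_nonneg)
  also have "\<dots> = ennreal c"
    using \<open>0 < k + v * l\<close> nn_integral_erlang_ith_moment[of "k + v * l" 0 0]
    by (simp add: nn_integral_cmult)
  finally show ?thesis
    using \<open>0 \<le> c\<close> by (simp add: emeasure_eq_measure c_def)
qed

lemma (in prob_space) indep_var_of_indep_vars:
  assumes "indep_vars M' X I" "i \<in> I" "j \<in> I" "i \<noteq> j"
  shows "indep_var (M' i) (X i) (M' j) (X j)"
proof -
  have "indep_var (Pi\<^sub>M {i} M') (\<lambda>\<omega>. restrict (\<lambda>i. X i \<omega>) {i}) (Pi\<^sub>M {j} M') (\<lambda>\<omega>. restrict (\<lambda>i. X i \<omega>) {j})"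
    using assms by (intro indep_var_restrict) auto
  from indep_var_compose[OF this, of "\<lambda>f. f i" "M' i" "\<lambda>f. f j" "M' j"]
  show ?thesis by (simp add: comp_def)
qed

lemma (in prob_space) prob_indep_vars_pair_single:
  assumes indep: "indep_vars M' X I" and "i \<in> I" "j \<in> I" "k \<in> I" "k \<noteq> i" "k \<noteq> j"
    and A: "A \<in> sets (M' i \<Otimes>\<^sub>M M' j)" and B: "B \<in> sets (M' k)"
  shows "\<P>(\<omega> in M. (X i \<omega>, X j \<omega>) \<in> A \<and> X k \<omega> \<in> B) =
    \<P>(\<omega> in M. (X i \<omega>, X j \<omega>) \<in> A) * \<P>(\<omega> in M. X k \<omega> \<in> B)"
proof -
  let ?R = "\<lambda>J \<omega>. restrict (\<lambda>i. X i \<omega>) J"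
  let ?A = "(\<lambda>f. (f i, f j)) -` A \<inter> space (Pi\<^sub>M {i, j} M')"
  let ?B = "(\<lambda>f. f k) -` B \<inter> space (Pi\<^sub>M {k} M')"
  have indep_RR: "indep_var (Pi\<^sub>M {i, j} M') (?R {i, j}) (Pi\<^sub>M {k} M') (?R {k})"
    using assms by (intro indep_var_restrict[OF indep]) auto
  have sets: "?A \<in> sets (Pi\<^sub>M {i, j} M')" "?B \<in> sets (Pi\<^sub>M {k} M')"
    using A B by (auto intro!: measurable_sets)
  have "X i \<omega> \<in> space (M' i)" "X j \<omega> \<in> space (M' j)" "X k \<omega> \<in> space (M' k)" if "\<omega> \<in> space M" for \<omega>
    using indep assms that by (auto simp: indep_vars_def measurable_space)
  then have "(\<lambda>\<omega>. (?R {i, j} \<omega>, ?R {k} \<omega>)) -` (?A \<times> ?B) \<inter> space M = {\<omega> \<in> space M. (X i \<omega>, X j \<omega>) \<in> A \<and> X k \<omega> \<in> B}"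
    and "?R {i, j} -` ?A \<inter> space M = {\<omega> \<in> space M. (X i \<omega>, X j \<omega>) \<in> A}"
    and "?R {k} -` ?B \<inter> space M = {\<omega> \<in> space M. X k \<omega> \<in> B}"
    by (auto simp: space_PiM)
  with indep_varD[OF indep_RR sets] show ?thesis
    by simp
qed

lemma rate_RD_less_iff:
  assumes "0 < gD"
  shows "rate_RD gD h < R \<longleftrightarrow> (cmod h)^2 < (2 powr R - 1) / gD"
proof -
  have "0 < 1 + gD * (cmod h)^2"
    using assms by (simp add: add_pos_nonneg)
  then have "rate_RD gD h < R \<longleftrightarrow> 1 + gD * (cmod h)^2 < 2 powr R"
    by (simp add: rate_RD_def log_less_iff)
  also have "\<dots> \<longleftrightarrow> (cmod h)^2 < (2 powr R - 1) / gD"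
    using assms by (simp add: pos_less_divide_eq mult.commute add.commute less_diff_eq)
  finally show ?thesis .
qed

lemma rate_SR_less_iff:
  assumes "0 < gR" and "0 \<le> gE"
  shows "rate_SR gR gE hSR hSE < R \<longleftrightarrow>
    (cmod hSR)^2 < (2 powr R - 1 + 2 powr R * gE * (cmod hSE)^2) / gR"
proof -
  have "0 < 1 + gR * (cmod hSR)^2" "0 < 1 + gE * (cmod hSE)^2"
    using assms by (simp_all add: add_pos_nonneg)
  then have "rate_SR gR gE hSR hSE < R \<longleftrightarrow> 1 + gR * (cmod hSR)^2 < 2 powr R * (1 + gE * (cmod hSE)^2)"
    by (simp add: rate_SR_def log_less_iff pos_divide_less_eq)
  also have "\<dots> \<longleftrightarrow> (cmod hSR)^2 < (2 powr R - 1 + 2 powr R * gE * (cmod hSE)^2) / gR"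
    using assms by (simp add: pos_less_divide_eq algebra_simps)
  finally show ?thesis .
qed

lemma secrecy_rate2_less_iff:
  assumes "0 < R" and "0 \<le> gE" and "0 < alpha" and "0 < gD"
  shows "secrecy_rate2 gE alpha gD hSR hRD hSE < R \<longleftrightarrow>
    (cmod hSR)^2 < (2 powr R - 1 + 2 powr R * gE * (cmod hSE)^2) / (alpha * gD) \<or>
    (cmod hRD)^2 < (2 powr R - 1) / gD"
  using assms by (simp add: secrecy_rate2_def min_less_iff_disj rate_SR_less_iff rate_RD_less_iff)

lemma (in prob_space) prob_indep_exponential_affine_le_and_le:
  assumes indep: "indep_vars (\<lambda>_. lborel) X {i, j, k}" and "i \<noteq> j" "i \<noteq> k" "j \<noteq> k"
    and exp_X: "\<And>n. n \<in> {i, j, k} \<Longrightarrow> distributed M lborel (X n) (exponential_density 1)"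
    and "0 \<le> u" "0 \<le> v" "0 \<le> w"
  shows "\<P>(\<omega> in M. u + v * X j \<omega> \<le> X i \<omega> \<and> w \<le> X k \<omega>) = exp (- u) / (1 + v) * exp (- w)"
proof -
  let ?S = "{p :: real \<times> real. u + v * snd p \<le> fst p}"
  have "\<P>(\<omega> in M. u + v * X j \<omega> \<le> X i \<omega> \<and> w \<le> X k \<omega>) =
      \<P>(\<omega> in M. (X i \<omega>, X j \<omega>) \<in> ?S) * \<P>(\<omega> in M. X k \<omega> \<in> {w..})"
    using prob_indep_vars_pair_single[OF indep _ _ _ _ _ affine_le_in_sets_lborel_pair, of i j k "{w..}"] assms
    by simp
  also have "\<P>(\<omega> in M. (X i \<omega>, X j \<omega>) \<in> ?S) = exp (- u) / (1 + v)"
    using prob_affine_le_indep_exponential[OF exp_X exp_X indep_var_of_indep_vars[OF indep]] assms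
    by simp
  also have "\<P>(\<omega> in M. X k \<omega> \<in> {w..}) = exp (- w)"
    using prob_exponential_atLeast[OF exp_X] assms by simp
  finally show ?thesis .
qed

lemma (in prob_space) secrecy_outage_probability:
  fixes h :: "nat \<Rightarrow> 'a \<Rightarrow> complex"
  assumes indep: "indep_vars (\<lambda>_. borel) h {0, 1, 2}"
    and CN: "\<forall>i\<in>{0, 1, 2}. distributed M lborel (h i) CN01_density"
    and "0 < R" and "0 \<le> gE" and "0 < alpha" and "0 < gD"
  shows "\<P>(\<omega> in M. secrecy_rate2 gE alpha gD (h 0 \<omega>) (h 1 \<omega>) (h 2 \<omega>) < R) =
    1 - exp (- ((2 powr R - 1) * (1 + 1 / alpha)) / gD) / (1 + 2 powr R * gE / alpha / gD)"
proof -
  define X where "X i \<omega> = (cmod (h i \<omega>))^2" for i \<omega>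
  define u where "u = (2 powr R - 1) / (alpha * gD)"
  define v where "v = 2 powr R * gE / (alpha * gD)"
  define w where "w = (2 powr R - 1) / gD"
  have "1 \<le> (2::real) powr R"
    using \<open>0 < R\<close> by (intro ge_one_powr_ge_zero) auto
  then have "u \<ge> 0" "v \<ge> 0" "w \<ge> 0"
    using assms unfolding u_def v_def w_def by simp_all
  have exp_X: "distributed M lborel (X i) (exponential_density 1)" if "i \<in> {0, 1, 2}" for i
    unfolding X_def using CN that by (intro distributed_CN01_norm_square) auto
  have [measurable]: "X i \<in> borel_measurable M" if "i \<in> {0, 1, 2}" for i
    using distributed_measurable[OF exp_X[OF that]] by simp
  have indep_X: "indep_vars (\<lambda>_. lborel) X {0, 1, 2}"
    unfolding X_def by (rule indep_vars_compose2[OF indep]) simp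
  have "{\<omega> \<in> space M. secrecy_rate2 gE alpha gD (h 0 \<omega>) (h 1 \<omega>) (h 2 \<omega>) < R} =
      space M - {\<omega> \<in> space M. u + v * X 2 \<omega> \<le> X 0 \<omega> \<and> w \<le> X 1 \<omega>}"
    using assms by (auto simp: secrecy_rate2_less_iff X_def u_def v_def w_def add_divide_distrib)
  moreover have "{\<omega> \<in> space M. u + v * X 2 \<omega> \<le> X 0 \<omega> \<and> w \<le> X 1 \<omega>} \<in> events"
    by measurable
  ultimately have "\<P>(\<omega> in M. secrecy_rate2 gE alpha gD (h 0 \<omega>) (h 1 \<omega>) (h 2 \<omega>) < R) =
      1 - \<P>(\<omega> in M. u + v * X 2 \<omega> \<le> X 0 \<omega> \<and> w \<le> X 1 \<omega>)"
    by (simp add: prob_compl)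
  also have "\<dots> = 1 - exp (- u) / (1 + v) * exp (- w)"
    using prob_indep_exponential_affine_le_and_le[where i = 0 and j = 2 and k = "1::nat"] indep_X exp_X
      \<open>u \<ge> 0\<close> \<open>v \<ge> 0\<close> \<open>w \<ge> 0\<close>
    by (simp add: insert_commute)
  also have "\<dots> = 1 - exp (- ((2 powr R - 1) * (1 + 1 / alpha)) / gD) / (1 + 2 powr R * gE / alpha / gD)"
    using assms by (simp add: u_def v_def w_def field_simps exp_add[symmetric])
  finally show ?thesis .
qed

lemma tendsto_at_top_mult_inverse_of_DERIV_0:
  fixes f :: "real \<Rightarrow> real"
  assumes "(f has_real_derivative D) (at 0)" and "f 0 = 0"
  shows "((\<lambda>x. x * f (inverse x)) \<longlongrightarrow> D) at_top"
proof -
  have "((\<lambda>y. f y / y) \<longlongrightarrow> D) (at_right 0)"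
    using assms by (auto simp: has_field_derivative_iff intro: tendsto_mono[OF at_within_le_at])
  from filterlim_compose[OF this filterlim_inverse_at_right_top]
  show ?thesis
    by (simp add: divide_inverse mult.commute)
qed

lemma tendsto_mult_one_minus_exp_div_at_top:
  "((\<lambda>x::real. x * (1 - exp (- a / x) / (1 + b / x))) \<longlongrightarrow> a + b) at_top"
proof -
  have "((\<lambda>t. 1 - exp (- a * t) / (1 + b * t)) has_real_derivative a + b) (at 0)"
    by (auto intro!: derivative_eq_intros)
  from tendsto_at_top_mult_inverse_of_DERIV_0[OF this]
  show ?thesis
    by (simp add: divide_inverse)
qed

theorem theorem5:
  fixes M :: "'a measure" and h :: "nat \<Rightarrow> 'a \<Rightarrow> complex"
    and gE R alpha :: real
  assumes "prob_space M"
    and "prob_space.indep_vars M (\<lambda>_. borel) h {0, 1, 2}"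
    and "\<forall>i\<in>{0, 1, 2}. distributed M lborel (h i) CN01_density"
    and "gE > 0" and "R > 0" and "alpha > 0"
  shows "M2_const gE alpha R > 0 \<and>
    ((\<lambda>gD. gD * measure M {\<omega> \<in> space M.
        secrecy_rate2 gE alpha gD (h 0 \<omega>) (h 1 \<omega>) (h 2 \<omega>) < R})
      \<longlongrightarrow> M2_const gE alpha R) at_top"
proof -
  interpret prob_space M by fact
  define a where "a = (2 powr R - 1) * (1 + 1 / alpha)"
  define b where "b = 2 powr R * gE / alpha"
  have M2: "M2_const gE alpha R = a + b"
    by (simp add: M2_const_def a_def b_def)
  have "a > 0" "b > 0"
    using assms by (simp_all add: a_def b_def add_pos_pos)
  have "\<forall>\<^sub>F gD in at_top. gD * (1 - exp (- a / gD) / (1 + b / gD)) =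
      gD * \<P>(\<omega> in M. secrecy_rate2 gE alpha gD (h 0 \<omega>) (h 1 \<omega>) (h 2 \<omega>) < R)"
    using eventually_gt_at_top[of 0]
  proof eventually_elim
    case (elim gD)
    show ?case
      using secrecy_outage_probability[OF assms(2,3) \<open>R > 0\<close> less_imp_le[OF \<open>gE > 0\<close>] \<open>alpha > 0\<close> elim]
      by (simp add: a_def b_def)
  qed
  with tendsto_mult_one_minus_exp_div_at_top[of a b]
  have "((\<lambda>gD. gD * \<P>(\<omega> in M. secrecy_rate2 gE alpha gD (h 0 \<omega>) (h 1 \<omega>) (h 2 \<omega>) < R))
      \<longlongrightarrow> a + b) at_top"
    by (rule Lim_transform_eventually)
  with \<open>a > 0\<close> \<open>b > 0\<close> show ?thesis
    by (simp add: M2)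
qed

end
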